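(* Let $H \subset L$ be light-cone regular, let $h \in H$, and let $H' = H \setminus \{h\}$. If $H'$ is light-cone regular, then $h$ is a minimal element of $H$ with respect to $\le$.
   Context: Let $L$ be a finitely generated $\mathbb{Z}$-module and $v_1,\dots,v_N\in L$ distinct elements linearly independent over $\mathbb{Z}_{\ge 0}$ (i.e. $\sum_i a_i v_i=0$ with all $a_i\in\mathbb{Z}_{\ge0}$ forces all $a_i=0$). Let $S=\{\sum_i a_iv_i : a_i\in\mathbb{Z}_{\ge0}\}$ and define the partial order $h_1\le h_2$ iff $h_1-h_2\in S$. A nonempty subset $H\subset L$ is light-cone regular if for every $h\in H$ the set $\{h'\in H: h'\le h\}$ is finite and $\{h'\in L: h'\ge h\}\subset H$. *)

theory Defs
  imports Main
begin

text \<open>The ambient finitely generated Z-module L is modelled as a type 'a of class ab_group_add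
  (a Z-module is exactly an abelian group) together with a finite-generation hypothesis.\<close>

inductive_set zspan :: "'a::ab_group_add set \<Rightarrow> 'a set" for G where
  zspan_zero: "0 \<in> zspan G"
| zspan_add: "x \<in> zspan G \<Longrightarrow> g \<in> G \<Longrightarrow> x + g \<in> zspan G"
| zspan_diff: "x \<in> zspan G \<Longrightarrow> g \<in> G \<Longrightarrow> x - g \<in> zspan G"

definition finitely_generated_Z :: "'a::ab_group_add itself \<Rightarrow> bool" where
  "finitely_generated_Z _ \<longleftrightarrow> (\<exists>G::'a set. finite G \<and> zspan G = UNIV)"

definition nsmul :: "nat \<Rightarrow> 'a::ab_group_add \<Rightarrow> 'a" where
  "nsmul n x = (\<Sum>k<n. x)"

text \<open>v_1..v_N represented as v 0, ..., v (N-1).\<close>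
definition nonneg_independent :: "nat \<Rightarrow> (nat \<Rightarrow> 'a::ab_group_add) \<Rightarrow> bool" where
  "nonneg_independent N v \<longleftrightarrow>
     (\<forall>a::nat \<Rightarrow> nat. (\<Sum>i<N. nsmul (a i) (v i)) = 0 \<longrightarrow> (\<forall>i<N. a i = 0))"

definition cone :: "nat \<Rightarrow> (nat \<Rightarrow> 'a::ab_group_add) \<Rightarrow> 'a set" where
  "cone N v = {\<Sum>i<N. nsmul (a i) (v i) | a :: nat \<Rightarrow> nat. True}"

definition cone_le :: "nat \<Rightarrow> (nat \<Rightarrow> 'a::ab_group_add) \<Rightarrow> 'a \<Rightarrow> 'a \<Rightarrow> bool" where
  "cone_le N v h1 h2 \<longleftrightarrow> h1 - h2 \<in> cone N v"

definition light_cone_regular :: "nat \<Rightarrow> (nat \<Rightarrow> 'a::ab_group_add) \<Rightarrow> 'a set \<Rightarrow> bool" where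
  "light_cone_regular N v H \<longleftrightarrow> H \<noteq> {} \<and>
     (\<forall>h\<in>H. finite {h'\<in>H. cone_le N v h' h} \<and> {h'. cone_le N v h h'} \<subseteq> H)"

end

theory Submission
  imports Defs
begin

lemma light_cone_regular_upward_closed:
  assumes "light_cone_regular N v H" and "h \<in> H" and "cone_le N v h h'"
  shows "h' \<in> H"
  using assms unfolding light_cone_regular_def by blast

theorem lemma3p12:
  fixes N :: nat and v :: "nat \<Rightarrow> 'a::ab_group_add" and H :: "'a set" and h :: 'a
  assumes "finitely_generated_Z TYPE('a)"
    and "inj_on v {..<N}"
    and "nonneg_independent N v"
    and "light_cone_regular N v H"
    and "h \<in> H"
    and "light_cone_regular N v (H - {h})"
  shows "\<forall>h'\<in>H. cone_le N v h' h \<longrightarrow> h' = h"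
proof (intro ballI impI)
  fix h' assume "h' \<in> H" and below: "cone_le N v h' h"
  show "h' = h"
  proof (rule ccontr)
    assume "h' \<noteq> h"
    with \<open>h' \<in> H\<close> have "h' \<in> H - {h}" by simp
    from assms(6) this below have "h \<in> H - {h}"
      by (rule light_cone_regular_upward_closed)
    then show False by simp
  qed
qed

end
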